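(* Let $x_0\in\mathbb{R}^2$, $r_0>0$, and let $E$ be a relatively closed subset of $B(x_0,r_0)$ such that $x_0\in E$, $\beta_E(x_0,r_0)\le1/32$, $E$ separates $B(x_0,r_0)$, and $\mathcal{H}^1(E)\le(2+1/8)r_0$. Then there exists a set $\Xi\subset(r_0/16,r_0)$ with $\mathcal{L}^1((r_0/16,r_0)\setminus\Xi)\le r_0/4$ such that for all $\rho\in\Xi$, the set $E\cap\partial B(x_0,\rho)$ consists of exactly two points at distance larger than $\rho$ from each other.
   Context: $B(x,r)$ is the open ball. $\beta_E(x_0,r_0)=r_0^{-1}\inf_\ell\sup_{y\in E\cap B(x_0,r_0)}\mathrm{dist}(y,\ell)$, infimum over lines through $x_0$ (attained); with $\nu$ a unit normal of a minimizing line and $D^\pm_t=\{z\in B(x_0,r_0):\pm(z-x_0)\cdot\nu>t\}$, $E$ separates $B(x_0,r_0)$ if $\beta:=\beta_E(x_0,r_0)\le1/2$ and $D^+_{\beta r_0}$, $D^-_{\beta r_0}$ lie in distinct connected components of $B(x_0,r_0)\setminus E$. *)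

theory Defs
  imports "HOL-Analysis.Analysis"
begin

text \<open>One-dimensional Hausdorff (outer) measure, normalised so that
  H^1 of a segment is its length: the delta-premeasure is the infimum of
  the sums of diameters over countable covers by bounded sets of diameter
  at most delta, and H^1 is the supremum over delta > 0.\<close>

definition hausdorff_pre1 :: "real \<Rightarrow> 'a::metric_space set \<Rightarrow> ennreal" where
  "hausdorff_pre1 \<delta> E =
     (INF C \<in> {C :: nat \<Rightarrow> 'a set. E \<subseteq> (\<Union>i. C i) \<and>
                  (\<forall>i. bounded (C i) \<and> diameter (C i) \<le> \<delta>)}.
        (\<Sum>i. ennreal (diameter (C i))))"

definition hausdorff1 :: "'a::metric_space set \<Rightarrow> ennreal" where
  "hausdorff1 E = (SUP \<delta> \<in> {0<..}. hausdorff_pre1 \<delta> E)"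

definition line_normal :: "real^2 \<Rightarrow> real^2 \<Rightarrow> (real^2) set" where
  "line_normal x0 \<nu> = {z. (z - x0) \<bullet> \<nu> = 0}"

definition beta_num :: "(real^2) set \<Rightarrow> real^2 \<Rightarrow> real \<Rightarrow> real^2 \<Rightarrow> real" where
  "beta_num E x0 r0 \<nu> = Sup ((\<lambda>y. infdist y (line_normal x0 \<nu>)) ` (E \<inter> ball x0 r0))"

definition beta :: "(real^2) set \<Rightarrow> real^2 \<Rightarrow> real \<Rightarrow> real" where
  "beta E x0 r0 = (1 / r0) * Inf (beta_num E x0 r0 ` {\<nu>. norm \<nu> = 1})"

definition half_disk :: "real^2 \<Rightarrow> real \<Rightarrow> real^2 \<Rightarrow> real \<Rightarrow> (real^2) set" where
  "half_disk x0 r0 \<nu> t = {z \<in> ball x0 r0. (z - x0) \<bullet> \<nu> > t}"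

definition separates :: "(real^2) set \<Rightarrow> real^2 \<Rightarrow> real \<Rightarrow> bool" where
  "separates E x0 r0 \<longleftrightarrow>
     beta E x0 r0 \<le> 1/2 \<and>
     (\<exists>\<nu>. norm \<nu> = 1 \<and> beta_num E x0 r0 \<nu> = r0 * beta E x0 r0 \<and>
        (\<exists>C1 C2. C1 \<in> components (ball x0 r0 - E) \<and> C2 \<in> components (ball x0 r0 - E) \<and>
           C1 \<noteq> C2 \<and>
           half_disk x0 r0 \<nu> (beta E x0 r0 * r0) \<subseteq> C1 \<and>
           half_disk x0 r0 (-\<nu>) (beta E x0 r0 * r0) \<subseteq> C2))"

end

theory Submission
  imports Defs
begin

(* Since E separates the disk and lies in the strip of width 2 beta r0 around a line through x0,
   each half of the circle of radius t, cut along that line, meets E; as the strip is thin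
   compared with t, the two intersection points lie near the opposite ends of the diameter
   orthogonal to the line, hence more than t apart. An Eilenberg-type inequality (the radial
   projection of a fine cover of E by sets C_i covers each t at least as often as there are
   well-separated points of E at distance t, while its total length is at most sum diam C_i)
   bounds the integral over t of the number of points of E on the circle of radius t by
   H^1(E) <= 17/8 r0. That number is at least 2 on (r0/16, r0), an interval of length
   15/16 r0, so it is at least 3 only on a set of measure at most 17/8 r0 - 15/8 r0 = r0/4. *)

lemma card_le_count_covering_sets:
  fixes C :: "nat \<Rightarrow> 'a::metric_space set" and I :: "nat \<Rightarrow> 'b set"
  assumes "finite P" "P \<subseteq> (\<Union>i. C i)"
    and "\<And>i. bounded (C i)" "\<And>i. diameter (C i) \<le> \<delta>"
    and "pairwise (\<lambda>p q. \<delta> < dist p q) P"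
    and "\<And>i p. p \<in> C i \<Longrightarrow> p \<in> P \<Longrightarrow> t \<in> I i"
  shows "of_nat (card P) \<le> (\<Sum>i. indicator (I i) t :: ennreal)"
proof -
  obtain j where j: "\<And>p. p \<in> P \<Longrightarrow> p \<in> C (j p)"
    using assms(2) by (metis UN_iff subsetD)
  have "inj_on j P"
  proof (rule inj_onI)
    fix p q assume "p \<in> P" "q \<in> P" "j p = j q"
    then have "dist p q \<le> \<delta>"
      using j diameter_bounded_bound[OF assms(3)] assms(4) by (metis order_trans)
    then show "p = q" using assms(5) \<open>p \<in> P\<close> \<open>q \<in> P\<close> by (force simp: pairwise_def)
  qed
  then have "of_nat (card P) = (\<Sum>i\<in>j ` P. 1 :: ennreal)"
    by (simp add: card_image)
  also have "\<dots> = (\<Sum>i\<in>j ` P. indicator (I i) t)"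
    using j assms(6) by (intro sum.cong) (auto simp: indicator_def)
  also have "\<dots> \<le> (\<Sum>i. indicator (I i) t)"
    by (rule sum_le_suminf) (auto simp: assms(1))
  finally show ?thesis .
qed

lemma dist_image_subset_short_interval:
  fixes C :: "'a::metric_space set"
  assumes "bounded C"
  obtains a b where "dist x0 ` C \<subseteq> {a..b}" "emeasure lborel {a..b} \<le> ennreal (diameter C)"
proof (cases "C = {}")
  case True
  then show ?thesis by (intro that[of 0 0]) auto
next
  case False
  have below: "bdd_below (dist x0 ` C)" by (rule bdd_belowI2[of _ 0]) simp
  have above: "bdd_above (dist x0 ` C)"
  proof -
    obtain e where "\<And>y. y \<in> C \<Longrightarrow> dist x0 y \<le> e" using bounded_any_center assms by blast
    then show ?thesis by (rule bdd_aboveI2)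
  qed
  have "Sup (dist x0 ` C) \<le> Inf (dist x0 ` C) + diameter C"
  proof (rule cSup_least)
    fix v assume "v \<in> dist x0 ` C"
    then obtain x where x: "x \<in> C" "v = dist x0 x" by blast
    have "dist x0 x - diameter C \<le> Inf (dist x0 ` C)"
    proof (rule cInf_greatest)
      fix w assume "w \<in> dist x0 ` C"
      then obtain y where "y \<in> C" "w = dist x0 y" by blast
      then show "dist x0 x - diameter C \<le> w"
        using diameter_bounded_bound[OF assms \<open>y \<in> C\<close> x(1)] dist_triangle[of x0 x y] by simp
    qed (use False in simp)
    then show "v \<le> Inf (dist x0 ` C) + diameter C" using x by simp
  qed (use False in simp)
  then show ?thesis
    by (intro that[of "Inf (dist x0 ` C)" "Sup (dist x0 ` C)"])
       (auto simp: emeasure_lborel_Icc_eq ennreal_leI below above cInf_lower cSup_upper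
             intro!: ennreal_leI)
qed

lemma hausdorff1_radial_count:
  fixes E :: "'a::metric_space set"
  assumes "\<delta> > 0" "hausdorff1 E < c"
  obtains g :: "real \<Rightarrow> ennreal"
  where "g \<in> borel_measurable lborel" "(\<integral>\<^sup>+t. g t \<partial>lborel) \<le> c"
    "\<And>t P. finite P \<Longrightarrow> P \<subseteq> E \<inter> sphere x0 t \<Longrightarrow> pairwise (\<lambda>p q. \<delta> < dist p q) P
       \<Longrightarrow> of_nat (card P) \<le> g t"
proof -
  have "hausdorff_pre1 \<delta> E < c"
    using assms unfolding hausdorff1_def by (meson SUP_upper greaterThan_iff le_less_trans)
  then obtain C where C: "E \<subseteq> (\<Union>i. C i)" "\<And>i. bounded (C i)" "\<And>i. diameter (C i) \<le> \<delta>"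
    and sum_C: "(\<Sum>i. ennreal (diameter (C i))) < c"
    unfolding hausdorff_pre1_def by (auto simp: INF_less_iff)
  have "\<exists>a b. dist x0 ` C i \<subseteq> {a..b} \<and> emeasure lborel {a..b} \<le> ennreal (diameter (C i))" for i
    using dist_image_subset_short_interval[OF C(2)] by metis
  then obtain a b where ab: "\<And>i. dist x0 ` C i \<subseteq> {a i..b i}"
    "\<And>i. emeasure lborel {a i..b i} \<le> ennreal (diameter (C i))"
    by metis
  define g where "g t = (\<Sum>i. indicator {a i..b i} t :: ennreal)" for t
  show thesis
  proof
    show "g \<in> borel_measurable lborel"
      unfolding g_def by (rule borel_measurable_suminf_order) simp
    have "(\<integral>\<^sup>+t. g t \<partial>lborel) = (\<Sum>i. emeasure lborel {a i..b i})"
      unfolding g_def by (subst nn_integral_suminf) auto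
    also have "\<dots> \<le> (\<Sum>i. ennreal (diameter (C i)))"
      by (intro suminf_le ab(2)) auto
    finally show "(\<integral>\<^sup>+t. g t \<partial>lborel) \<le> c" using sum_C by simp
  next
    fix t P assume P: "finite P" "P \<subseteq> E \<inter> sphere x0 t" "pairwise (\<lambda>p q. \<delta> < dist p q) P"
    show "of_nat (card P) \<le> g t"
      unfolding g_def
    proof (rule card_le_count_covering_sets[OF P(1) _ C(2,3) P(3)])
      show "P \<subseteq> (\<Union>i. C i)" using P(2) C(1) by blast
      fix i p assume "p \<in> C i" "p \<in> P"
      then show "t \<in> {a i..b i}" using ab(1)[of i] P(2) by force
    qed
  qed
qed

lemma emeasure_superlevel_le:
  fixes g :: "'a \<Rightarrow> ennreal"
  assumes "g \<in> borel_measurable M" "(\<integral>\<^sup>+x. g x \<partial>M) \<le> ennreal c"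
    and "A \<in> sets M" "emeasure M A = ennreal a" "0 \<le> a"
    and "\<And>x. x \<in> A \<Longrightarrow> of_nat k \<le> g x"
  shows "emeasure M {x \<in> A. of_nat (Suc k) \<le> g x} \<le> ennreal (c - k * a)"
proof -
  define L where "L = {x \<in> A. of_nat (Suc k) \<le> g x}"
  have L: "L \<in> sets M" unfolding L_def using assms(1,3) by measurable
  have "ennreal (k * a) + emeasure M L = (\<integral>\<^sup>+x. of_nat k * indicator A x + indicator L x \<partial>M)"
    using assms(3-5) L
    by (simp add: nn_integral_add nn_integral_cmult ennreal_mult ennreal_of_nat_eq_real_of_nat)
  also have "\<dots> \<le> (\<integral>\<^sup>+x. g x \<partial>M)"
  proof (rule nn_integral_mono)
    fix x
    show "of_nat k * indicator A x + indicator L x \<le> g x"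
      using assms(6)[of x] by (cases "x \<in> A"; cases "x \<in> L") (auto simp: L_def add.commute)
  qed
  finally have "ennreal (k * a) + emeasure M L \<le> ennreal c" using assms(2) by simp
  then show ?thesis unfolding L_def[symmetric]
    by (metis add.commute assms(5) ennreal_le_minus_iff ennreal_minus of_nat_0_le_iff
        zero_le_mult_iff)
qed

lemma emeasure_sections_three_separated_le:
  fixes E :: "'a::metric_space set"
  assumes "\<delta> > 0" "\<epsilon> > 0" "0 \<le> H" "hausdorff1 E \<le> ennreal H" "lo \<le> hi"
    and two: "\<And>t. t \<in> {lo<..<hi} \<Longrightarrow> \<exists>a b. {a, b} \<subseteq> E \<inter> sphere x0 t \<and> \<delta> < dist a b"
  shows "\<exists>M \<in> sets lborel. emeasure lborel M \<le> ennreal (H - 2 * (hi - lo) + \<epsilon>) \<and>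
    (\<forall>t \<in> {lo<..<hi}. \<forall>P. finite P \<and> P \<subseteq> E \<inter> sphere x0 t \<and> 3 \<le> card P \<and>
       pairwise (\<lambda>p q. \<delta> < dist p q) P \<longrightarrow> t \<in> M)"
proof -
  have "hausdorff1 E < ennreal (H + \<epsilon>)"
    using assms(2-4) by (meson ennreal_lessI le_less_trans less_add_same_cancel1 add_nonneg_pos)
  then obtain g where g: "g \<in> borel_measurable lborel" "(\<integral>\<^sup>+t. g t \<partial>lborel) \<le> ennreal (H + \<epsilon>)"
    and card_le_g: "\<And>t P. finite P \<Longrightarrow> P \<subseteq> E \<inter> sphere x0 t \<Longrightarrow> pairwise (\<lambda>p q. \<delta> < dist p q) P
       \<Longrightarrow> of_nat (card P) \<le> g t"
    using hausdorff1_radial_count[OF assms(1)] by metis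
  have two_le_g: "of_nat 2 \<le> g t" if t: "t \<in> {lo<..<hi}" for t
  proof -
    obtain a b where "{a, b} \<subseteq> E \<inter> sphere x0 t" "\<delta> < dist a b" using two[OF t] by blast
    moreover from this have "a \<noteq> b" using assms(1) by auto
    ultimately show ?thesis
      using card_le_g[of "{a, b}" t] by (simp add: pairwise_insert dist_commute)
  qed
  define M where "M = {t \<in> {lo<..<hi}. 3 \<le> g t}"
  have "M \<in> sets lborel" unfolding M_def using g(1) by measurable
  moreover have "emeasure lborel M \<le> ennreal (H - 2 * (hi - lo) + \<epsilon>)"
    using emeasure_superlevel_le[OF g, of "{lo<..<hi}" "hi - lo" 2] two_le_g assms(5)
    by (simp add: M_def algebra_simps)
  moreover have "t \<in> M" if "t \<in> {lo<..<hi}" "finite P" "P \<subseteq> E \<inter> sphere x0 t" "3 \<le> card P"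
      "pairwise (\<lambda>p q. \<delta> < dist p q) P" for t P
    using that card_le_g[of P t] by (auto simp: M_def intro: order_trans[rotated])
  ultimately show ?thesis by blast
qed

lemma eventually_pairwise_dist_gt:
  fixes P :: "'a::metric_space set"
  assumes "finite P" "(\<delta> \<longlongrightarrow> 0) F"
  shows "eventually (\<lambda>n. pairwise (\<lambda>p q. \<delta> n < dist p q) P) F"
  unfolding pairwise_def
proof (intro eventually_ball_finite assms(1) ballI)
  fix p q assume "p \<in> P" "q \<in> P"
  show "eventually (\<lambda>n. p \<noteq> q \<longrightarrow> \<delta> n < dist p q) F"
  proof (cases "p = q")
    case False
    then show ?thesis
      using order_tendstoD(2)[OF assms(2), of "dist p q"] by (simp add: eventually_mono)
  qed simp
qed

lemma emeasure_liminf_le: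
  assumes "\<And>n. A n \<in> sets M" "\<And>n. emeasure M (A n) \<le> e n" "e \<longlonglongrightarrow> c"
  shows "emeasure M (\<Union>m. \<Inter>n\<in>{m..}. A n) \<le> c"
proof -
  define K where "K m = (\<Inter>n\<in>{m..}. A n)" for m
  have K: "K m \<in> sets M" for m
    unfolding K_def by (rule sets.countable_INT') (auto simp: assms(1))
  have "emeasure M (K m) \<le> c" for m
  proof (rule LIMSEQ_le_const[OF assms(3)], intro exI allI impI)
    fix n assume "m \<le> n"
    then have "emeasure M (K m) \<le> emeasure M (A n)"
      unfolding K_def by (intro emeasure_mono) (auto simp: assms(1))
    also have "\<dots> \<le> e n" by (rule assms(2))
    finally show "emeasure M (K m) \<le> e n" .
  qed
  moreover have "emeasure M (\<Union>m. K m) = (SUP m. emeasure M (K m))"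
    using K by (intro SUP_emeasure_incseq[symmetric]) (auto simp: incseq_def K_def)
  ultimately show ?thesis unfolding K_def by (simp add: SUP_least)
qed

lemma hausdorff1_sections_at_most_two:
  fixes E :: "'a::metric_space set"
  assumes "0 \<le> H" "hausdorff1 E \<le> ennreal H" "lo \<le> hi" "d > 0"
    and two: "\<And>t. t \<in> {lo<..<hi} \<Longrightarrow> \<exists>a b. {a, b} \<subseteq> E \<inter> sphere x0 t \<and> d < dist a b"
  obtains N where "N \<in> sets lborel" "emeasure lborel N \<le> ennreal (H - 2 * (hi - lo))"
    "\<And>t. t \<in> {lo<..<hi} - N \<Longrightarrow> finite (E \<inter> sphere x0 t) \<and> card (E \<inter> sphere x0 t) \<le> 2"
proof -
  define \<delta> where "\<delta> n = d * inverse (real (Suc n))" for n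
  have \<delta>: "0 < \<delta> n" "\<delta> n \<le> d" for n
    unfolding \<delta>_def using assms(4) by (auto simp: field_simps)
  have \<delta>_lim: "\<delta> \<longlonglongrightarrow> 0"
    unfolding \<delta>_def using tendsto_mult_right_zero[OF LIMSEQ_inverse_real_of_nat] .
  have M_ex: "\<exists>M \<in> sets lborel. emeasure lborel M \<le> ennreal (H - 2 * (hi - lo) + \<delta> n) \<and>
    (\<forall>t \<in> {lo<..<hi}. \<forall>P. finite P \<and> P \<subseteq> E \<inter> sphere x0 t \<and> 3 \<le> card P \<and>
       pairwise (\<lambda>p q. \<delta> n < dist p q) P \<longrightarrow> t \<in> M)" for n
  (* \<delta> n serves both as the separation scale and as the slack in the measure bound. *)
  proof (rule emeasure_sections_three_separated_le[OF \<delta>(1)[of n] \<delta>(1)[of n] assms(1-3)])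
    fix t assume "t \<in> {lo<..<hi}"
    then show "\<exists>a b. {a, b} \<subseteq> E \<inter> sphere x0 t \<and> \<delta> n < dist a b"
      using two \<delta>(2)[of n] by (meson le_less_trans)
  qed
  from choice[OF allI[OF M_ex[unfolded Bex_def]]] obtain M where M_spec:
    "\<forall>n. M n \<in> sets lborel \<and> emeasure lborel (M n) \<le> ennreal (H - 2 * (hi - lo) + \<delta> n) \<and>
      (\<forall>t \<in> {lo<..<hi}. \<forall>P. finite P \<and> P \<subseteq> E \<inter> sphere x0 t \<and> 3 \<le> card P \<and>
        pairwise (\<lambda>p q. \<delta> n < dist p q) P \<longrightarrow> t \<in> M n)" ..
  then have M: "\<And>n. M n \<in> sets lborel"
    "\<And>n. emeasure lborel (M n) \<le> ennreal (H - 2 * (hi - lo) + \<delta> n)"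
    by simp_all
  from M_spec have in_M: "\<And>n t P. t \<in> {lo<..<hi} \<Longrightarrow> finite P \<Longrightarrow> P \<subseteq> E \<inter> sphere x0 t
      \<Longrightarrow> 3 \<le> card P \<Longrightarrow> pairwise (\<lambda>p q. \<delta> n < dist p q) P \<Longrightarrow> t \<in> M n"
    by blast
  show thesis
  proof
    show "(\<Union>m. \<Inter>n\<in>{m..}. M n) \<in> sets lborel"
      using M(1) by (intro sets.countable_UN sets.countable_INT') auto
    have "(\<lambda>n. ennreal (H - 2 * (hi - lo) + \<delta> n)) \<longlonglongrightarrow> ennreal (H - 2 * (hi - lo))"
      using tendsto_ennrealI[OF tendsto_add[OF tendsto_const \<delta>_lim]] by simp
    then show "emeasure lborel (\<Union>m. \<Inter>n\<in>{m..}. M n) \<le> ennreal (H - 2 * (hi - lo))"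
      by (rule emeasure_liminf_le[OF M])
  next
    fix t assume t: "t \<in> {lo<..<hi} - (\<Union>m. \<Inter>n\<in>{m..}. M n)"
    show "finite (E \<inter> sphere x0 t) \<and> card (E \<inter> sphere x0 t) \<le> 2"
    proof (rule ccontr)
      assume "\<not> ?thesis"
      then have "infinite (E \<inter> sphere x0 t) \<or> 3 \<le> card (E \<inter> sphere x0 t)" by auto
      then obtain P where P: "P \<subseteq> E \<inter> sphere x0 t" "finite P" "card P = 3"
        using infinite_arbitrarily_large obtain_subset_with_card_n by meson
      obtain m where "\<And>n. m \<le> n \<Longrightarrow> pairwise (\<lambda>p q. \<delta> n < dist p q) P"
        using eventually_pairwise_dist_gt[OF P(2) \<delta>_lim] by (auto simp: eventually_sequentially)
      then have "t \<in> (\<Inter>n\<in>{m..}. M n)" using in_M t P by auto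
      with t show False by blast
    qed
  qed
qed

lemma abs_inner_le_infdist_line_normal:
  assumes "norm \<nu> = 1"
  shows "\<bar>(y - x0) \<bullet> \<nu>\<bar> \<le> infdist y (line_normal x0 \<nu>)"
proof -
  have "x0 \<in> line_normal x0 \<nu>" by (simp add: line_normal_def)
  then have "line_normal x0 \<nu> \<noteq> {}" by blast
  then show ?thesis unfolding infdist_notempty[OF \<open>line_normal x0 \<nu> \<noteq> {}\<close>]
  proof (rule cINF_greatest)
    fix z assume "z \<in> line_normal x0 \<nu>"
    then have "(y - x0) \<bullet> \<nu> = (y - z) \<bullet> \<nu>"
      by (simp add: line_normal_def inner_diff_left)
    also have "\<bar>\<dots>\<bar> \<le> norm (y - z) * norm \<nu>" by (rule Cauchy_Schwarz_ineq2)
    finally show "\<bar>(y - x0) \<bullet> \<nu>\<bar> \<le> dist y z" using assms by (simp add: dist_norm)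
  qed
qed

lemma abs_inner_le_beta_num:
  assumes "norm \<nu> = 1" "y \<in> E \<inter> ball x0 r0"
  shows "\<bar>(y - x0) \<bullet> \<nu>\<bar> \<le> beta_num E x0 r0 \<nu>"
proof -
  let ?d = "\<lambda>y. infdist y (line_normal x0 \<nu>)"
  have "?d z \<le> r0" if "z \<in> E \<inter> ball x0 r0" for z
    using that infdist_le[of x0 "line_normal x0 \<nu>" z]
    by (simp add: line_normal_def dist_commute)
  then have "?d y \<le> beta_num E x0 r0 \<nu>"
    unfolding beta_num_def using assms(2) by (intro cSup_upper bdd_aboveI2) auto
  then show ?thesis using abs_inner_le_infdist_line_normal[OF assms(1)] order_trans by blast
qed

lemma orthonormal_cos_sin_combination:
  fixes \<nu> \<tau> :: "'a::real_inner"
  assumes "norm \<nu> = 1" "norm \<tau> = 1" "\<nu> \<bullet> \<tau> = 0"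
  shows "(cos \<theta> *\<^sub>R \<nu> + sin \<theta> *\<^sub>R \<tau>) \<bullet> \<nu> = cos \<theta>"
    and "(cos \<theta> *\<^sub>R \<nu> + sin \<theta> *\<^sub>R \<tau>) \<bullet> \<tau> = sin \<theta>"
    and "norm (cos \<theta> *\<^sub>R \<nu> + sin \<theta> *\<^sub>R \<tau>) = 1"
proof -
  have unit: "\<nu> \<bullet> \<nu> = 1" "\<tau> \<bullet> \<tau> = 1" using assms(1,2) by (simp_all add: dot_square_norm)
  show \<nu>: "(cos \<theta> *\<^sub>R \<nu> + sin \<theta> *\<^sub>R \<tau>) \<bullet> \<nu> = cos \<theta>"
    and \<tau>: "(cos \<theta> *\<^sub>R \<nu> + sin \<theta> *\<^sub>R \<tau>) \<bullet> \<tau> = sin \<theta>"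
    using unit assms(3) inner_commute[of \<tau> \<nu>] by (simp_all add: inner_add_left)
  have "(norm (cos \<theta> *\<^sub>R \<nu> + sin \<theta> *\<^sub>R \<tau>))\<^sup>2 = (cos \<theta>)\<^sup>2 + (sin \<theta>)\<^sup>2"
    unfolding power2_norm_eq_inner by (simp add: inner_add_right \<nu> \<tau> power2_eq_square)
  then show "norm (cos \<theta> *\<^sub>R \<nu> + sin \<theta> *\<^sub>R \<tau>) = 1"
    by (smt (verit) norm_ge_zero power2_eq_1_iff sin_cos_squared_add)
qed

lemma sin_gt_half_if_abs_cos_lt_half:
  assumes "\<theta> \<in> {0..pi}" "\<bar>cos \<theta>\<bar> < 1/2"
  shows "1/2 < sin \<theta>"
proof (rule ccontr)
  assume "\<not> 1/2 < sin \<theta>"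
  then have "(sin \<theta>)\<^sup>2 \<le> (1/2)\<^sup>2"
    using assms(1) sin_ge_zero by (intro power_mono) auto
  moreover have "\<bar>cos \<theta>\<bar>\<^sup>2 < (1/2)\<^sup>2" using assms(2) by (intro power_strict_mono) auto
  ultimately show False using sin_cos_squared_add[of \<theta>] unfolding power2_eq_square by simp
qed

lemma half_circle_meets_separating_set:
  fixes x0 \<nu> \<tau> :: "real^2"
  assumes "norm \<nu> = 1" "norm \<tau> = 1" "\<nu> \<bullet> \<tau> = 0" "0 < t" "t < r0" "h < t"
    and C: "C1 \<in> components (ball x0 r0 - E)" "C2 \<in> components (ball x0 r0 - E)" "C1 \<noteq> C2"
    and D: "half_disk x0 r0 \<nu> h \<subseteq> C1" "half_disk x0 r0 (-\<nu>) h \<subseteq> C2"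
  obtains \<theta> where "\<theta> \<in> {0..pi}" "x0 + t *\<^sub>R (cos \<theta> *\<^sub>R \<nu> + sin \<theta> *\<^sub>R \<tau>) \<in> E"
proof -
  define \<gamma> where "\<gamma> \<theta> = x0 + t *\<^sub>R (cos \<theta> *\<^sub>R \<nu> + sin \<theta> *\<^sub>R \<tau>)" for \<theta>
  note rot = orthonormal_cos_sin_combination[OF assms(1-3)]
  have dist_\<gamma>: "dist x0 (\<gamma> \<theta>) = t" for \<theta>
    unfolding \<gamma>_def dist_norm using rot(3) assms(4) by simp
  have \<gamma>_\<nu>: "(\<gamma> \<theta> - x0) \<bullet> \<nu> = t * cos \<theta>" for \<theta>
    unfolding \<gamma>_def using rot(1) by (simp add: inner_scaleR_left)
  have "\<gamma> 0 \<in> half_disk x0 r0 \<nu> h" "\<gamma> pi \<in> half_disk x0 r0 (-\<nu>) h"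
    unfolding half_disk_def using dist_\<gamma> \<gamma>_\<nu>[of 0] \<gamma>_\<nu>[of pi] assms(5,6) by auto
  then have ends: "\<gamma> 0 \<in> C1" "\<gamma> pi \<in> C2" using D by blast+
  have "\<exists>\<theta>\<in>{0..pi}. \<gamma> \<theta> \<in> E"
  proof (rule ccontr)
    assume "\<not> ?thesis"
    then have "\<gamma> ` {0..pi} \<subseteq> ball x0 r0 - E"
      using dist_\<gamma> assms(5) by auto
    moreover have "connected (\<gamma> ` {0..pi})"
      unfolding \<gamma>_def by (intro connected_continuous_image continuous_intros) auto
    ultimately have "\<gamma> ` {0..pi} \<subseteq> C1"
      using ends(1) by (intro components_maximal[OF C(1)]) auto
    then have "\<gamma> pi \<in> C1" using pi_ge_zero by auto
    then show False
      using ends(2) components_nonoverlap[OF C(1,2)] C(3) by blast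
  qed
  then show thesis using that unfolding \<gamma>_def by blast
qed

lemma separating_set_sphere_far_points:
  fixes x0 \<nu> :: "real^2"
  assumes \<nu>: "norm \<nu> = 1" and strip: "\<And>y. y \<in> E \<Longrightarrow> \<bar>(y - x0) \<bullet> \<nu>\<bar> \<le> h"
    and C: "C1 \<in> components (ball x0 r0 - E)" "C2 \<in> components (ball x0 r0 - E)" "C1 \<noteq> C2"
    and D: "half_disk x0 r0 \<nu> h \<subseteq> C1" "half_disk x0 r0 (-\<nu>) h \<subseteq> C2"
    and t: "0 < t" "2 * h < t" "t < r0"
  shows "\<exists>a b. {a, b} \<subseteq> E \<inter> sphere x0 t \<and> t < dist a b"
proof -
  have far: "\<exists>p \<in> E \<inter> sphere x0 t. t/2 < (p - x0) \<bullet> \<sigma>"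
    if \<sigma>: "norm \<sigma> = 1" "\<nu> \<bullet> \<sigma> = 0" for \<sigma>
  proof -
    note rot = orthonormal_cos_sin_combination[OF \<nu> \<sigma>]
    obtain \<theta> where \<theta>: "\<theta> \<in> {0..pi}" and p: "x0 + t *\<^sub>R (cos \<theta> *\<^sub>R \<nu> + sin \<theta> *\<^sub>R \<sigma>) \<in> E"
      by (rule half_circle_meets_separating_set[OF \<nu> \<sigma> t(1,3) _ C D]) (use t in linarith)
    have "t * \<bar>cos \<theta>\<bar> \<le> h" using strip[OF p] rot(1) t(1) by (simp add: inner_scaleR_left abs_mult)
    then have "t * \<bar>cos \<theta>\<bar> < t * (1/2)" using t(2) by linarith
    then have "\<bar>cos \<theta>\<bar> < 1/2" using t(1) by simp
    then have "t/2 < t * sin \<theta>" using sin_gt_half_if_abs_cos_lt_half[OF \<theta>] t(1) by simp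
    then show ?thesis
      using p rot t(1) by (intro bexI[OF _ IntI[OF p]]) (simp_all add: inner_scaleR_left dist_norm)
  qed
  obtain \<tau>0 :: "real^2" where \<tau>0: "\<tau>0 \<noteq> 0" "orthogonal \<nu> \<tau>0"
    using orthogonal_to_vector_exists[of \<nu>] by auto
  define \<tau> where "\<tau> = \<tau>0 /\<^sub>R norm \<tau>0"
  have \<tau>: "norm \<tau> = 1" "\<nu> \<bullet> \<tau> = 0" "norm (-\<tau>) = 1" "\<nu> \<bullet> -\<tau> = 0"
    using \<tau>0 unfolding \<tau>_def orthogonal_def by auto
  obtain a where a: "a \<in> E \<inter> sphere x0 t" "t/2 < (a - x0) \<bullet> \<tau>"
    using far[OF \<tau>(1,2)] by blast
  obtain b where b: "b \<in> E \<inter> sphere x0 t" "t/2 < (b - x0) \<bullet> -\<tau>"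
    using far[OF \<tau>(3,4)] by blast
  have "t < (a - x0) \<bullet> \<tau> - (b - x0) \<bullet> \<tau>" using a(2) b(2) by simp
  also have "\<dots> = (a - b) \<bullet> \<tau>" by (simp add: inner_diff_left)
  also have "\<dots> \<le> dist a b" using norm_cauchy_schwarz[of "a - b" \<tau>] \<tau>(1) by (simp add: dist_norm)
  finally show ?thesis using a(1) b(1) by blast
qed

lemma separates_sphere_far_points:
  assumes "separates E x0 r0" "E \<subseteq> ball x0 r0" "0 < t" "2 * (beta E x0 r0 * r0) < t" "t < r0"
  shows "\<exists>a b. {a, b} \<subseteq> E \<inter> sphere x0 t \<and> t < dist a b"
proof -
  define h where "h = beta E x0 r0 * r0"
  from assms(1) obtain \<nu> C1 C2 where \<nu>: "norm \<nu> = 1" and beta_\<nu>: "beta_num E x0 r0 \<nu> = h"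
    and C: "C1 \<in> components (ball x0 r0 - E)" "C2 \<in> components (ball x0 r0 - E)" "C1 \<noteq> C2"
    and D: "half_disk x0 r0 \<nu> h \<subseteq> C1" "half_disk x0 r0 (-\<nu>) h \<subseteq> C2"
    unfolding separates_def h_def by (auto simp: mult.commute)
  have strip: "\<bar>(y - x0) \<bullet> \<nu>\<bar> \<le> h" if "y \<in> E" for y
    using abs_inner_le_beta_num[OF \<nu>, of y E] that assms(2) beta_\<nu> by auto
  show ?thesis
    using separating_set_sphere_far_points[OF \<nu> strip C D] assms(3-5) by (simp add: h_def)
qed

theorem lemma4p29:
  fixes x0 :: "real^2" and r0 :: real and E :: "(real^2) set"
  assumes "r0 > 0"
    and "E \<subseteq> ball x0 r0" and "closedin (top_of_set (ball x0 r0)) E"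
    and "x0 \<in> E"
    and "beta E x0 r0 \<le> 1/32"
    and "separates E x0 r0"
    and "hausdorff1 E \<le> ennreal ((2 + 1/8) * r0)"
  shows "\<exists>\<Xi>. \<Xi> \<subseteq> {r0/16<..<r0} \<and>
           (\<exists>N \<in> sets lebesgue. {r0/16<..<r0} - \<Xi> \<subseteq> N \<and> emeasure lebesgue N \<le> ennreal (r0/4)) \<and>
           (\<forall>\<rho>\<in>\<Xi>. \<exists>a b. E \<inter> sphere x0 \<rho> = {a, b} \<and> dist a b > \<rho>)"
proof -
  have flat: "beta E x0 r0 * r0 \<le> r0/32"
    using mult_right_mono[OF assms(5), of r0] assms(1) by simp
  have far: "\<exists>a b. {a, b} \<subseteq> E \<inter> sphere x0 t \<and> t < dist a b" if "r0/16 < t" "t < r0" for t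
    by (rule separates_sphere_far_points[OF assms(6,2)]) (use that flat assms(1) in linarith)+
  obtain N where N: "N \<in> sets lborel"
      "emeasure lborel N \<le> ennreal ((2 + 1/8) * r0 - 2 * (r0 - r0/16))"
    and at_most_two: "\<And>t. t \<in> {r0/16<..<r0} - N \<Longrightarrow>
      finite (E \<inter> sphere x0 t) \<and> card (E \<inter> sphere x0 t) \<le> 2"
  proof (rule hausdorff1_sections_at_most_two[OF _ assms(7)])
    fix t assume "t \<in> {r0/16<..<r0}"
    then show "\<exists>a b. {a, b} \<subseteq> E \<inter> sphere x0 t \<and> r0/16 < dist a b"
      using far[of t] by fastforce
  qed (use assms(1) in simp_all)
  have "\<exists>a b. E \<inter> sphere x0 t = {a, b} \<and> t < dist a b" if t: "t \<in> {r0/16<..<r0} - N" for t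
  proof -
    obtain a b where ab: "{a, b} \<subseteq> E \<inter> sphere x0 t" "t < dist a b" using far[of t] t by auto
    moreover have "a \<noteq> b" using ab(2) t assms(1) by auto
    ultimately have "E \<inter> sphere x0 t = {a, b}"
      using at_most_two[OF t] by (intro card_seteq[symmetric]) auto
    then show ?thesis using ab(2) by blast
  qed
  moreover have "{r0/16<..<r0} - ({r0/16<..<r0} - N) \<subseteq> N" by blast
  moreover have "emeasure lebesgue N \<le> ennreal (r0/4)" using N by simp
  ultimately show ?thesis
    using N(1) by (intro exI[of _ "{r0/16<..<r0} - N"] conjI bexI[of _ N]) auto
qed

end
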